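(* Assume Condition 1. For any $t\ge t_1$ and $\pi\in\Pi$, if $V_t(\pi)>\theta K$, then \[\Delta_{t-1}(\pi)\ge\sqrt{\frac{72\,V_t(\pi)\,C_{t-1}}{t-1}}.\]
   Context: Contextual bandit setting: $A$ a set of $K$ actions, $X$ contexts, $\Pi$ a finite set of $N$ policies, $D$ a distribution over $(x,\vec r)\in X\times[0,1]^K$ with marginal $D_X$; $(x_t,\vec r_t)\sim D$ i.i.d., the learner observes $x_t$, picks $a_t$, sees only $r_t:=r_t(a_t)$. $\eta_D(\pi)=\mathbb{E}[r(\pi(x))]$, $\pi^*$ a maximizer. $W_P(x,a)=\sum_{\pi:\pi(x)=a}P(\pi)$. With history $((x_i,a_i,r_i,p_i))_{i\le t}$, $\eta_t(W)=\frac1t\sum_i r_iW(x_i,a_i)/p_i$ for randomized policies $W$, $\pi_t=\arg\max_\pi\eta_t(\pi)$, $\Delta_t(W)=\eta_t(\pi_t)-\eta_t(W)$; $\mathbb{E}_{x\sim h_{t-1}}$ is the average over $x_1,\dots,x_{t-1}$. Actions are chosen by RandomizedUCB$(\Pi,\delta,K)$: $C_t=2\log(Nt/\delta)$, $\mu_t=\min\{\frac1{2K},\sqrt{C_t/(2Kt)}\}$; $P_t$ is a distribution over $\Pi$ whose objective $\sum_\pi P(\pi)\Delta_{t-1}(\pi)$ is within $\epsilon_{\mathrm{opt},t}=O(\sqrt{KC_t/t})$ of the optimum of minimizing it subject to: for all distributions $Q$ over $\Pi$, $\mathbb{E}_{\pi\sim Q}\mathbb{E}_{x\sim h_{t-1}}[1/((1-K\mu_t)W_P(x,\pi(x))+\mu_t)]\le\max\{4K,(t-1)\Delta_{t-1}(W_Q)^2/(180C_{t-1})\}$,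 with each constraint satisfied up to additive slack $K$; $W'_t(a)=(1-K\mu_t)W_{P_t}(x_t,a)+\mu_t$, $a_t\sim W'_t$, $p_t=W'_t(a_t)$. Constants: $\epsilon\in(0,1)$ fixed, $\rho=7500/\epsilon^3$, $\theta=(\rho+1)/(1-(1+\epsilon)/2)$. $t_0$ is the first $t$ with $\mu_t=\sqrt{C_t/(2Kt)}$; $t_1=\lceil16K\log(8KN/\delta)\rceil$. $V_t(\pi)=K$ for $t\le t_0$ and $V_t(\pi)=K+\mathbb{E}_{x\sim D_X}[1/((1-K\mu_t)W_{P_t}(x,\pi(x))+\mu_t)]$ for $t>t_0$; $\bar V_t(\pi)=\max_{\tau\le t}V_\tau(\pi)$. Condition 1: (i) for all $\pi\in\Pi$ and $t\ge t_1$, $\mathbb{E}_{x\sim D_X}[1/((1-K\mu_t)W_{P_t}(x,\pi(x))+\mu_t)]\le(1+\epsilon)\mathbb{E}_{x\sim h_{t-1}}[1/((1-K\mu_t)W_{P_t}(x,\pi(x))+\mu_t)]+\rho K$; and (ii) for all $\pi,\pi'\in\Pi$ and $t\ge t_0$, $|(\eta_t(\pi)-\eta_t(\pi'))-(\eta_D(\pi)-\eta_D(\pi'))|\le2\sqrt{(\bar V_t(\pi)+\bar V_t(\pi'))C_t/t}$. *)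

theory Defs
  imports "HOL-Probability.Probability"
begin

text \<open>Actions: a finite set A of K = card A actions.  Policies: a finite set Pol of
  functions from contexts to actions, N = card Pol.  Time is indexed from 1;
  the realised history is given by sequences
  xs i (context), rs i (reward vector), as i (chosen action), ps i (its probability),
  and P i is the distribution over Pol used in round i.\<close>

definition is_dist :: "'p set \<Rightarrow> ('p \<Rightarrow> real) \<Rightarrow> bool" where
  "is_dist Pol P \<longleftrightarrow> (\<forall>\<pi>\<in>Pol. 0 \<le> P \<pi>) \<and> sum P Pol = 1"

definition WP :: "('x \<Rightarrow> 'a) set \<Rightarrow> (('x \<Rightarrow> 'a) \<Rightarrow> real) \<Rightarrow> 'x \<Rightarrow> 'a \<Rightarrow> real" where
  "WP Pol P x a = (\<Sum>\<pi>\<in>{\<pi>\<in>Pol. \<pi> x = a}. P \<pi>)"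

definition polW :: "('x \<Rightarrow> 'a) \<Rightarrow> 'x \<Rightarrow> 'a \<Rightarrow> real" where
  "polW \<pi> x a = (if \<pi> x = a then 1 else 0)"

definition eta_hist :: "(nat \<Rightarrow> 'x) \<Rightarrow> (nat \<Rightarrow> 'a \<Rightarrow> real) \<Rightarrow> (nat \<Rightarrow> 'a) \<Rightarrow> (nat \<Rightarrow> real)
    \<Rightarrow> nat \<Rightarrow> ('x \<Rightarrow> 'a \<Rightarrow> real) \<Rightarrow> real" where
  "eta_hist xs rs as ps t W =
     (1 / real t) * (\<Sum>i=1..t. rs i (as i) * W (xs i) (as i) / ps i)"

definition Delta_hist :: "('x \<Rightarrow> 'a) set \<Rightarrow> (nat \<Rightarrow> 'x) \<Rightarrow> (nat \<Rightarrow> 'a \<Rightarrow> real) \<Rightarrow> (nat \<Rightarrow> 'a)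
    \<Rightarrow> (nat \<Rightarrow> real) \<Rightarrow> nat \<Rightarrow> ('x \<Rightarrow> 'a \<Rightarrow> real) \<Rightarrow> real" where
  "Delta_hist Pol xs rs as ps t W =
     Max ((\<lambda>\<pi>. eta_hist xs rs as ps t (polW \<pi>)) ` Pol) - eta_hist xs rs as ps t W"

definition hist_avg :: "(nat \<Rightarrow> 'x) \<Rightarrow> nat \<Rightarrow> ('x \<Rightarrow> real) \<Rightarrow> real" where
  "hist_avg xs t f = (1 / real t) * (\<Sum>i=1..t. f (xs i))"

definition Cc :: "nat \<Rightarrow> real \<Rightarrow> nat \<Rightarrow> real" where
  "Cc N \<delta> t = 2 * ln (real N * real t / \<delta>)"

definition mu :: "nat \<Rightarrow> nat \<Rightarrow> real \<Rightarrow> nat \<Rightarrow> real" where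
  "mu K N \<delta> t = min (1 / (2 * real K)) (sqrt (Cc N \<delta> t / (2 * real K * real t)))"

definition rucb_feasible :: "'a set \<Rightarrow> ('x \<Rightarrow> 'a) set \<Rightarrow> real \<Rightarrow> (nat \<Rightarrow> 'x) \<Rightarrow> (nat \<Rightarrow> 'a \<Rightarrow> real)
    \<Rightarrow> (nat \<Rightarrow> 'a) \<Rightarrow> (nat \<Rightarrow> real) \<Rightarrow> nat \<Rightarrow> real \<Rightarrow> (('x \<Rightarrow> 'a) \<Rightarrow> real) \<Rightarrow> bool" where
  "rucb_feasible A Pol \<delta> xs rs as ps t s P \<longleftrightarrow>
     is_dist Pol P \<and>
     (\<forall>Q. is_dist Pol Q \<longrightarrow>
        (\<Sum>\<pi>\<in>Pol. Q \<pi> * hist_avg xs (t - 1)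
            (\<lambda>x. 1 / ((1 - real (card A) * mu (card A) (card Pol) \<delta> t) * WP Pol P x (\<pi> x)
                      + mu (card A) (card Pol) \<delta> t)))
        \<le> max (4 * real (card A))
               (real (t - 1) * (Delta_hist Pol xs rs as ps (t - 1) (WP Pol Q))\<^sup>2
                 / (180 * Cc (card Pol) \<delta> (t - 1))) + s)"

text \<open>The (deterministic) properties of a run of RandomizedUCB(Pol, delta, K) on the
  realised data: for every round t >= 1, P t satisfies all constraints up to slack K,
  its objective is within eps_opt,t = copt * sqrt(K C_t / t) of the value of every
  exactly feasible distribution, a_t is an action and p_t = W'_t(a_t).\<close>
definition rucb_run :: "'a set \<Rightarrow> ('x \<Rightarrow> 'a) set \<Rightarrow> real \<Rightarrow> real \<Rightarrow> (nat \<Rightarrow> 'x) \<Rightarrow> (nat \<Rightarrow> 'a \<Rightarrow> real)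
    \<Rightarrow> (nat \<Rightarrow> 'a) \<Rightarrow> (nat \<Rightarrow> real) \<Rightarrow> (nat \<Rightarrow> ('x \<Rightarrow> 'a) \<Rightarrow> real) \<Rightarrow> bool" where
  "rucb_run A Pol \<delta> copt xs rs as ps P \<longleftrightarrow>
     (\<forall>t\<ge>1.
        rucb_feasible A Pol \<delta> xs rs as ps t (real (card A)) (P t) \<and>
        (\<forall>P'. rucb_feasible A Pol \<delta> xs rs as ps t 0 P' \<longrightarrow>
           (\<Sum>\<pi>\<in>Pol. P t \<pi> * Delta_hist Pol xs rs as ps (t - 1) (polW \<pi>))
             \<le> (\<Sum>\<pi>\<in>Pol. P' \<pi> * Delta_hist Pol xs rs as ps (t - 1) (polW \<pi>))
                + copt * sqrt (real (card A) * Cc (card Pol) \<delta> t / real t)) \<and>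
        as t \<in> A \<and>
        ps t = (1 - real (card A) * mu (card A) (card Pol) \<delta> t) * WP Pol (P t) (xs t) (as t)
               + mu (card A) (card Pol) \<delta> t)"

definition rho :: "real \<Rightarrow> real" where
  "rho \<epsilon> = 7500 / \<epsilon> ^ 3"

definition theta :: "real \<Rightarrow> real" where
  "theta \<epsilon> = (rho \<epsilon> + 1) / (1 - (1 + \<epsilon>) / 2)"

definition t0 :: "nat \<Rightarrow> nat \<Rightarrow> real \<Rightarrow> nat" where
  "t0 K N \<delta> = (LEAST t. 1 \<le> t \<and> mu K N \<delta> t = sqrt (Cc N \<delta> t / (2 * real K * real t)))"

definition t1 :: "nat \<Rightarrow> nat \<Rightarrow> real \<Rightarrow> nat" where
  "t1 K N \<delta> = nat \<lceil>16 * real K * ln (8 * real K * real N / \<delta>)\<rceil>"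

text \<open>Expectation over the context marginal D_X of D (D a distribution on pairs
  (context, reward vector)).\<close>
definition EX_D :: "('x \<times> ('a \<Rightarrow> real)) measure \<Rightarrow> ('x \<Rightarrow> real) \<Rightarrow> real" where
  "EX_D D f = (\<integral>z. f (fst z) \<partial>D)"

definition eta_D :: "('x \<times> ('a \<Rightarrow> real)) measure \<Rightarrow> ('x \<Rightarrow> 'a) \<Rightarrow> real" where
  "eta_D D \<pi> = (\<integral>z. snd z (\<pi> (fst z)) \<partial>D)"

definition V :: "'a set \<Rightarrow> ('x \<Rightarrow> 'a) set \<Rightarrow> real \<Rightarrow> ('x \<times> ('a \<Rightarrow> real)) measure
    \<Rightarrow> (nat \<Rightarrow> ('x \<Rightarrow> 'a) \<Rightarrow> real) \<Rightarrow> nat \<Rightarrow> ('x \<Rightarrow> 'a) \<Rightarrow> real" where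
  "V A Pol \<delta> D P t \<pi> =
     (if t \<le> t0 (card A) (card Pol) \<delta> then real (card A)
      else real (card A) + EX_D D (\<lambda>x. 1 / ((1 - real (card A) * mu (card A) (card Pol) \<delta> t)
                                              * WP Pol (P t) x (\<pi> x) + mu (card A) (card Pol) \<delta> t)))"

definition Vbar :: "'a set \<Rightarrow> ('x \<Rightarrow> 'a) set \<Rightarrow> real \<Rightarrow> ('x \<times> ('a \<Rightarrow> real)) measure
    \<Rightarrow> (nat \<Rightarrow> ('x \<Rightarrow> 'a) \<Rightarrow> real) \<Rightarrow> nat \<Rightarrow> ('x \<Rightarrow> 'a) \<Rightarrow> real" where
  "Vbar A Pol \<delta> D P t \<pi> = Max ((\<lambda>\<tau>. V A Pol \<delta> D P \<tau> \<pi>) ` {..t})"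

definition condition1 :: "real \<Rightarrow> 'a set \<Rightarrow> ('x \<Rightarrow> 'a) set \<Rightarrow> real \<Rightarrow> ('x \<times> ('a \<Rightarrow> real)) measure
    \<Rightarrow> (nat \<Rightarrow> 'x) \<Rightarrow> (nat \<Rightarrow> 'a \<Rightarrow> real) \<Rightarrow> (nat \<Rightarrow> 'a) \<Rightarrow> (nat \<Rightarrow> real)
    \<Rightarrow> (nat \<Rightarrow> ('x \<Rightarrow> 'a) \<Rightarrow> real) \<Rightarrow> bool" where
  "condition1 \<epsilon> A Pol \<delta> D xs rs as ps P \<longleftrightarrow>
     (\<forall>\<pi>\<in>Pol. \<forall>t\<ge>t1 (card A) (card Pol) \<delta>.
        (let m = mu (card A) (card Pol) \<delta> t;
             f = (\<lambda>x. 1 / ((1 - real (card A) * m) * WP Pol (P t) x (\<pi> x) + m))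
         in EX_D D f \<le> (1 + \<epsilon>) * hist_avg xs (t - 1) f + rho \<epsilon> * real (card A))) \<and>
     (\<forall>\<pi>\<in>Pol. \<forall>\<pi>'\<in>Pol. \<forall>t\<ge>t0 (card A) (card Pol) \<delta>.
        \<bar>(eta_hist xs rs as ps t (polW \<pi>) - eta_hist xs rs as ps t (polW \<pi>'))
           - (eta_D D \<pi> - eta_D D \<pi>')\<bar>
        \<le> 2 * sqrt ((Vbar A Pol \<delta> D P t \<pi> + Vbar A Pol \<delta> D P t \<pi>') * Cc (card Pol) \<delta> t / real t))"

end

theory Submission
  imports Defs
begin

text \<open>Once \<open>V\<^sub>t(\<pi>) > \<theta>K\<close>, round \<open>t\<close> lies past \<open>t\<^sub>0\<close>, so \<open>V\<^sub>t(\<pi>)\<close> is \<open>K\<close> plus the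
  population variance term.  Condition 1(i) bounds that term by \<open>(1+\<epsilon>)\<close> times its empirical
  counterpart plus \<open>\<rho>K\<close>, and the RandomizedUCB constraint for the point mass at \<open>\<pi>\<close> bounds the
  empirical counterpart by \<open>max(4K, M) + K\<close> with \<open>M = (t-1)\<Delta>\<^sub>t\<^sub>-\<^sub>1(\<pi>)\<^sup>2/(180C\<^sub>t\<^sub>-\<^sub>1)\<close>.  Since
  \<open>\<theta>\<close> is large, the \<open>K\<close>-terms are absorbed and \<open>V\<^sub>t(\<pi>) \<le> 5M/2\<close>, i.e. \<open>72 V\<^sub>t(\<pi>) C\<^sub>t\<^sub>-\<^sub>1/(t-1) \<le> \<Delta>\<^sub>t\<^sub>-\<^sub>1(\<pi>)\<^sup>2\<close>.\<close>

definition inv_smoothed_WP :: "'a set \<Rightarrow> ('x \<Rightarrow> 'a) set \<Rightarrow> real \<Rightarrow> (('x \<Rightarrow> 'a) \<Rightarrow> real)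
    \<Rightarrow> nat \<Rightarrow> ('x \<Rightarrow> 'a) \<Rightarrow> 'x \<Rightarrow> real" where
  "inv_smoothed_WP A Pol \<delta> Q t \<pi> =
     (\<lambda>x. 1 / ((1 - real (card A) * mu (card A) (card Pol) \<delta> t) * WP Pol Q x (\<pi> x)
               + mu (card A) (card Pol) \<delta> t))"

definition point_mass :: "'p \<Rightarrow> 'p \<Rightarrow> real" where
  "point_mass \<pi> = (\<lambda>\<sigma>. if \<sigma> = \<pi> then 1 else 0)"

lemma is_dist_point_mass:
  assumes "finite Pol" and "\<pi> \<in> Pol"
  shows "is_dist Pol (point_mass \<pi>)"
  using assms by (simp add: is_dist_def point_mass_def sum.delta')

lemma WP_point_mass:
  assumes "finite Pol" and "\<pi> \<in> Pol"
  shows "WP Pol (point_mass \<pi>) = polW \<pi>"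
proof (intro ext)
  fix x a
  have "finite {\<sigma>\<in>Pol. \<sigma> x = a}" using assms(1) by simp
  then show "WP Pol (point_mass \<pi>) x a = polW \<pi> x a"
    using assms(2) by (simp add: WP_def point_mass_def polW_def sum.delta)
qed

lemma Delta_hist_polW_nonneg:
  assumes "finite Pol" and "\<pi> \<in> Pol"
  shows "0 \<le> Delta_hist Pol xs rs as ps t (polW \<pi>)"
proof -
  have "eta_hist xs rs as ps t (polW \<pi>) \<le> Max ((\<lambda>\<sigma>. eta_hist xs rs as ps t (polW \<sigma>)) ` Pol)"
    using assms by (intro Max_ge) auto
  then show ?thesis by (simp add: Delta_hist_def)
qed

lemma rucb_feasibleD:
  assumes "rucb_feasible A Pol \<delta> xs rs as ps t s Q" and "is_dist Pol Q'"
  shows "(\<Sum>\<sigma>\<in>Pol. Q' \<sigma> * hist_avg xs (t - 1) (inv_smoothed_WP A Pol \<delta> Q t \<sigma>))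
           \<le> max (4 * real (card A))
                 (real (t - 1) * (Delta_hist Pol xs rs as ps (t - 1) (WP Pol Q'))\<^sup>2
                   / (180 * Cc (card Pol) \<delta> (t - 1))) + s"
  using assms unfolding rucb_feasible_def inv_smoothed_WP_def by blast

lemma rucb_feasible_point_mass:
  assumes "rucb_feasible A Pol \<delta> xs rs as ps t s Q" and "finite Pol" and "\<pi> \<in> Pol"
  shows "hist_avg xs (t - 1) (inv_smoothed_WP A Pol \<delta> Q t \<pi>)
           \<le> max (4 * real (card A))
                 (real (t - 1) * (Delta_hist Pol xs rs as ps (t - 1) (polW \<pi>))\<^sup>2
                   / (180 * Cc (card Pol) \<delta> (t - 1))) + s"
proof -
  have "(\<Sum>\<sigma>\<in>Pol. point_mass \<pi> \<sigma> * hist_avg xs (t - 1) (inv_smoothed_WP A Pol \<delta> Q t \<sigma>))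
          = hist_avg xs (t - 1) (inv_smoothed_WP A Pol \<delta> Q t \<pi>)"
    using assms(2,3) by (simp add: point_mass_def mult_delta_left sum.delta)
  with rucb_feasibleD[OF assms(1) is_dist_point_mass[OF assms(2,3)]] show ?thesis
    by (simp only: WP_point_mass[OF assms(2,3)])
qed

lemma V_after_t0:
  assumes "t0 (card A) (card Pol) \<delta> < t"
  shows "V A Pol \<delta> D P t \<pi> = real (card A) + EX_D D (inv_smoothed_WP A Pol \<delta> (P t) t \<pi>)"
  using assms by (simp add: V_def inv_smoothed_WP_def)

lemma condition1_variance_bound:
  assumes "condition1 \<epsilon> A Pol \<delta> D xs rs as ps P" and "\<pi> \<in> Pol"
    and "t1 (card A) (card Pol) \<delta> \<le> t"
  shows "EX_D D (inv_smoothed_WP A Pol \<delta> (P t) t \<pi>)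
           \<le> (1 + \<epsilon>) * hist_avg xs (t - 1) (inv_smoothed_WP A Pol \<delta> (P t) t \<pi>)
              + rho \<epsilon> * real (card A)"
  using assms unfolding condition1_def inv_smoothed_WP_def Let_def by blast

lemma rho_ge_7500:
  assumes "0 < \<epsilon>" and "\<epsilon> < 1"
  shows "7500 \<le> rho \<epsilon>"
proof -
  have "\<epsilon> ^ 3 \<le> 1" "0 < \<epsilon> ^ 3" using assms by (simp_all add: power_le_one)
  then show ?thesis by (simp add: rho_def field_simps)
qed

lemma variance_bound_forces_large_M:
  fixes \<rho> \<epsilon> K V M :: real
  assumes "0 < \<epsilon>" and "\<epsilon> < 1" and "4 \<le> \<rho>" and "0 \<le> K"
    and V_gt: "(\<rho> + 1) / (1 - (1 + \<epsilon>) / 2) * K < V"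
    and V_le: "V \<le> K + (1 + \<epsilon>) * (max (4 * K) M + K) + \<rho> * K"
  shows "4 * K \<le> M"
proof (rule ccontr)
  assume "\<not> 4 * K \<le> M"
  then have "V \<le> (\<rho> + 6 + 5 * \<epsilon>) * K" using V_le by (simp add: algebra_simps)
  then have "(1 - \<epsilon>) * V \<le> (1 - \<epsilon>) * (\<rho> + 6 + 5 * \<epsilon>) * K"
    using assms(2) by (simp add: mult_left_mono)
  also have "\<dots> \<le> 2 * (\<rho> + 1) * K"
  proof (rule mult_right_mono)
    have "(1 - \<epsilon>) * (\<rho> + 6 + 5 * \<epsilon>) = \<rho> + 6 - \<epsilon> * (\<rho> + 1) - 5 * \<epsilon>\<^sup>2"
      by (simp add: algebra_simps power2_eq_square)
    also have "\<dots> \<le> 2 * (\<rho> + 1)"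
    proof -
      have "0 \<le> \<epsilon> * (\<rho> + 1) + 5 * \<epsilon>\<^sup>2" using assms(1,3) by simp
      then show ?thesis using assms(3) by (simp add: algebra_simps)
    qed
    finally show "(1 - \<epsilon>) * (\<rho> + 6 + 5 * \<epsilon>) \<le> 2 * (\<rho> + 1)" .
  qed (use assms(4) in simp)
  finally show False using V_gt assms(2) by (simp add: field_simps)
qed

lemma variance_absorbed:
  fixes \<rho> \<epsilon> K V M :: real
  assumes "0 < \<epsilon>" and "\<epsilon> < 1" and "4 \<le> \<rho>" and "0 \<le> K"
    and V_gt: "(\<rho> + 1) / (1 - (1 + \<epsilon>) / 2) * K < V"
    and V_le: "V \<le> K + (1 + \<epsilon>) * (max (4 * K) M + K) + \<rho> * K"
  shows "V \<le> 5 / 2 * M"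
proof -
  have V_gt': "2 * (\<rho> + 1) * K < (1 - \<epsilon>) * V"
    using V_gt assms(2) by (simp add: field_simps)
  from variance_bound_forces_large_M[OF assms] have "V \<le> K + (1 + \<epsilon>) * (M + K) + \<rho> * K"
    using V_le by (simp add: max_absorb2)
  also have "\<dots> = (1 + \<epsilon>) * M + (2 + \<epsilon> + \<rho>) * K"
    by (simp add: algebra_simps)
  finally have V_le': "V \<le> (1 + \<epsilon>) * M + (2 + \<epsilon> + \<rho>) * K" .
  have "5 * ((1 - \<epsilon>) * (2 + \<epsilon> + \<rho>)) \<le> 2 * (\<rho> + 1) * (3 - 2 * \<epsilon>)"
  proof -
    have "2 * (\<rho> + 1) * (3 - 2 * \<epsilon>) - 5 * ((1 - \<epsilon>) * (2 + \<epsilon> + \<rho>))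
            = (1 + \<epsilon>) * (\<rho> - 4 + 5 * \<epsilon>)"
      by (simp add: algebra_simps)
    also have "\<dots> \<ge> 0" using assms(1,3) by simp
    finally show ?thesis by simp
  qed
  from mult_right_mono[OF this assms(4)]
  have "(1 - \<epsilon>) * (5 * ((2 + \<epsilon> + \<rho>) * K)) \<le> (3 - 2 * \<epsilon>) * (2 * (\<rho> + 1) * K)"
    by (simp add: algebra_simps)
  also have "\<dots> \<le> (3 - 2 * \<epsilon>) * ((1 - \<epsilon>) * V)"
    using V_gt' assms(2) by (intro mult_left_mono) auto
  finally have "(1 - \<epsilon>) * (5 * ((2 + \<epsilon> + \<rho>) * K)) \<le> (1 - \<epsilon>) * ((3 - 2 * \<epsilon>) * V)"
    by (simp add: algebra_simps)
  then have "5 * ((2 + \<epsilon> + \<rho>) * K) \<le> (3 - 2 * \<epsilon>) * V"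
    using assms(2) by (simp add: mult_le_cancel_left_pos)
  with V_le' have "(1 + \<epsilon>) * V \<le> (1 + \<epsilon>) * (5 / 2 * M)"
    by (simp add: algebra_simps)
  then show ?thesis using assms(1) by simp
qed

lemma sqrt_bound_of_scaled_square:
  fixes \<Delta> V C :: real and n :: nat
  assumes "0 \<le> \<Delta>" and "0 \<le> V" and "V \<le> 5 / 2 * (real n * \<Delta>\<^sup>2 / (180 * C))"
  shows "sqrt (72 * V * C / real n) \<le> \<Delta>"
proof (cases "0 < C \<and> 0 < n")
  case True
  have "5 / 2 * (real n * \<Delta>\<^sup>2 / (180 * C)) = real n * \<Delta>\<^sup>2 / C / 72" by simp
  then have "72 * V * C \<le> real n * \<Delta>\<^sup>2"
    using True assms(3) by (simp add: le_divide_eq mult.commute mult.left_commute)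
  then have "72 * V * C / real n \<le> \<Delta>\<^sup>2"
    using True by (simp add: pos_divide_le_eq mult.commute)
  then show ?thesis using assms(1) real_le_lsqrt by blast
next
  case False
  have "72 * V * C / real n \<le> 0"
  proof (cases "0 < C")
    case False
    then have "72 * V * C \<le> 0" using assms(2) mult_nonneg_nonpos[of "72 * V" C] by simp
    then show ?thesis by (simp add: divide_nonpos_nonneg)
  qed (use False in simp)
  then have "sqrt (72 * V * C / real n) \<le> 0" by simp
  then show ?thesis using assms(1) by linarith
qed

theorem lemma12:
  fixes A :: "'a set" and Pol :: "('x \<Rightarrow> 'a) set" and \<delta> \<epsilon> copt :: real
    and D :: "('x \<times> ('a \<Rightarrow> real)) measure"
    and xs :: "nat \<Rightarrow> 'x" and rs :: "nat \<Rightarrow> 'a \<Rightarrow> real" and as :: "nat \<Rightarrow> 'a"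
    and ps :: "nat \<Rightarrow> real" and P :: "nat \<Rightarrow> ('x \<Rightarrow> 'a) \<Rightarrow> real"
    and t :: nat and \<pi> :: "'x \<Rightarrow> 'a"
  assumes "finite A" and "A \<noteq> {}"
    and "finite Pol" and "Pol \<noteq> {}" and "\<forall>\<sigma>\<in>Pol. \<forall>x. \<sigma> x \<in> A"
    and "0 < \<delta>" and "\<delta> < 1"
    and "0 < \<epsilon>" and "\<epsilon> < 1"
    and "prob_space D"
    and "\<forall>z\<in>space D. \<forall>a\<in>A. 0 \<le> snd z a \<and> snd z a \<le> 1"
    and "\<forall>i. \<forall>a\<in>A. 0 \<le> rs i a \<and> rs i a \<le> 1"
    and "rucb_run A Pol \<delta> copt xs rs as ps P"
    and "condition1 \<epsilon> A Pol \<delta> D xs rs as ps P"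
    and "t \<ge> t1 (card A) (card Pol) \<delta>"
    and "\<pi> \<in> Pol"
    and "V A Pol \<delta> D P t \<pi> > theta \<epsilon> * real (card A)"
  shows "Delta_hist Pol xs rs as ps (t - 1) (polW \<pi>)
           \<ge> sqrt (72 * V A Pol \<delta> D P t \<pi> * Cc (card Pol) \<delta> (t - 1) / real (t - 1))"
proof -
  let ?K = "real (card A)" and ?V = "V A Pol \<delta> D P t \<pi>"
  let ?f = "inv_smoothed_WP A Pol \<delta> (P t) t \<pi>"
  let ?M = "real (t - 1) * (Delta_hist Pol xs rs as ps (t - 1) (polW \<pi>))\<^sup>2
              / (180 * Cc (card Pol) \<delta> (t - 1))"
  have \<rho>: "4 \<le> rho \<epsilon>" using rho_ge_7500[OF assms(8,9)] by simp
  have "1 \<le> theta \<epsilon>"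
    using \<rho> assms(8,9) by (simp add: theta_def field_simps)
  then have "?K \<le> theta \<epsilon> * ?K" using mult_right_mono[of 1 "theta \<epsilon>" ?K] by simp
  then have "?K < ?V" using assms(17) by linarith
  then have "t0 (card A) (card Pol) \<delta> < t" by (cases "t \<le> t0 (card A) (card Pol) \<delta>") (auto simp: V_def)
  then have V_eq: "?V = ?K + EX_D D ?f" and "1 \<le> t" by (auto simp: V_after_t0)
  then have "rucb_feasible A Pol \<delta> xs rs as ps t ?K (P t)"
    using assms(13) by (simp add: rucb_run_def)
  from rucb_feasible_point_mass[OF this assms(3,16)] assms(8)
  have "(1 + \<epsilon>) * hist_avg xs (t - 1) ?f \<le> (1 + \<epsilon>) * (max (4 * ?K) ?M + ?K)"
    by (intro mult_left_mono) auto
  with condition1_variance_bound[OF assms(14,16,15)]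
  have "?V \<le> ?K + (1 + \<epsilon>) * (max (4 * ?K) ?M + ?K) + rho \<epsilon> * ?K"
    unfolding V_eq by linarith
  with assms(17) have V_bound: "?V \<le> 5 / 2 * ?M"
    unfolding theta_def by (intro variance_absorbed[OF assms(8,9) \<rho>]) simp_all
  have "0 \<le> ?V" using \<open>?K < ?V\<close> by linarith
  from sqrt_bound_of_scaled_square[OF Delta_hist_polW_nonneg[OF assms(3,16)] this V_bound]
  show ?thesis .
qed

end
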